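(* Let $\bm{G}_t\in\mathbb{R}^{n_1\times n_2}$, $\epsilon_t>0$, $\bm{L}_t=\epsilon_t\bm{I}_{n_1}+\mathrm{diag}(\bm{G}_t\bm{G}_t^T)$, $\bm{R}_t=\epsilon_t\bm{I}_{n_2}+\mathrm{diag}(\bm{G}_t^T\bm{G}_t)$, $\nu_t=\epsilon_t^{1/2}$, $\mu_t=(\epsilon_t+\|\bm{G}_t\|_\vee^2)^{1/2}$. Let $\bm{Z}_1,\bm{Z}_2\in\mathbb{R}^{n_1\times n_2}$ have ranks $r_1$ and $r_2$ with $r_1+r_2\le\min\{n_1,n_2\}$ and $\langle\bm{Z}_1,\bm{Z}_2\rangle_{\mathcal{W}_t}=0$. Assume the linear operator $\mathcal{A}:\mathbb{R}^{n_1\times n_2}\to\mathbb{R}^m$ satisfies the restricted isometry property of order $r_1+r_2$ with constant $\delta_{r_1+r_2}$. Then $$|\langle\mathcal{A}\bm{Z}_1,\mathcal{A}\bm{Z}_2\rangle|\le\frac12\Big((\nu_t^{-1}-\mu_t^{-1})+(\nu_t^{-1}+\mu_t^{-1})\delta_{r_1+r_2}\Big)\|\bm{Z}_1\|_{\mathcal{W}_t}\|\bm{Z}_2\|_{\mathcal{W}_t}.$$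
   Context: Restricted isometry property of order $s$: there is $\delta_s\in(0,1)$ with $(1-\delta_s)\|\bm{Z}\|_F^2\le\|\mathcal{A}\bm{Z}\|_2^2\le(1+\delta_s)\|\bm{Z}\|_F^2$ for all $\bm{Z}$ of rank at most $s$. $\langle\bm{Z},\bm{Y}\rangle_{\mathcal{W}_t}=\langle\bm{L}_t^{1/4}\bm{Z}\bm{R}_t^{1/4},\bm{Y}\rangle$ with $\langle\bm{A},\bm{B}\rangle=\mathrm{trace}(\bm{A}^T\bm{B})$; $\|\cdot\|_{\mathcal{W}_t}$ is the induced norm. $\|\bm{Z}\|_\vee=\max\{\max_i\|\bm{Z}(i,:)\|_2,\max_j\|\bm{Z}(:,j)\|_2\}$. *)

theory Defs
  imports "HOL-Analysis.Analysis"
begin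

text \<open>Matrices in R^(n1 x n2) are represented as real^'n2^'n1 (rows indexed by 'n1).\<close>

definition diag_mat :: "('n::finite \<Rightarrow> real) \<Rightarrow> real^'n^'n" where
  "diag_mat d = (\<chi> i j. if i = j then d i else 0)"

definition diag_part :: "real^'n::finite^'n \<Rightarrow> real^'n^'n" where
  "diag_part M = diag_mat (\<lambda>i. M $ i $ i)"

text \<open>Real power of a diagonal matrix with positive diagonal (the only case used).\<close>
definition diag_powr :: "real^'n::finite^'n \<Rightarrow> real \<Rightarrow> real^'n^'n" where
  "diag_powr M p = diag_mat (\<lambda>i. (M $ i $ i) powr p)"

definition frob_inner :: "real^'n2::finite^'n1::finite \<Rightarrow> real^'n2^'n1 \<Rightarrow> real" where
  "frob_inner A B = trace (transpose A ** B)"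

definition frob_norm :: "real^'n2::finite^'n1::finite \<Rightarrow> real" where
  "frob_norm Z = sqrt (frob_inner Z Z)"

definition Lmat :: "real \<Rightarrow> real^'n2::finite^'n1::finite \<Rightarrow> real^'n1^'n1" where
  "Lmat eps G = eps *\<^sub>R mat 1 + diag_part (G ** transpose G)"

definition Rmat :: "real \<Rightarrow> real^'n2::finite^'n1::finite \<Rightarrow> real^'n2^'n2" where
  "Rmat eps G = eps *\<^sub>R mat 1 + diag_part (transpose G ** G)"

definition W_inner :: "real \<Rightarrow> real^'n2::finite^'n1::finite \<Rightarrow> real^'n2^'n1 \<Rightarrow> real^'n2^'n1 \<Rightarrow> real" where
  "W_inner eps G Z Y =
     frob_inner (diag_powr (Lmat eps G) (1/4) ** Z ** diag_powr (Rmat eps G) (1/4)) Y"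

definition W_norm :: "real \<Rightarrow> real^'n2::finite^'n1::finite \<Rightarrow> real^'n2^'n1 \<Rightarrow> real" where
  "W_norm eps G Z = sqrt (W_inner eps G Z Z)"

definition vee_norm :: "real^'n2::finite^'n1::finite \<Rightarrow> real" where
  "vee_norm Z = max (Max (range (\<lambda>i. norm (row i Z)))) (Max (range (\<lambda>j. norm (column j Z))))"

definition RIP :: "(real^'n2::finite^'n1::finite \<Rightarrow> real^'m::finite) \<Rightarrow> nat \<Rightarrow> real \<Rightarrow> bool" where
  "RIP A s \<delta> \<longleftrightarrow> 0 < \<delta> \<and> \<delta> < 1 \<and>
     (\<forall>Z. rank Z \<le> s \<longrightarrow>
        (1 - \<delta>) * (frob_norm Z)\<^sup>2 \<le> (norm (A Z))\<^sup>2 \<and>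
        (norm (A Z))\<^sup>2 \<le> (1 + \<delta>) * (frob_norm Z)\<^sup>2)"

end

theory Submission imports Defs begin

text \<open>The weighted inner product is a Frobenius inner product with entrywise weights
  \<open>(L\<^sub>i\<^sub>i R\<^sub>j\<^sub>j)\<^bsup>1/4\<^esup>\<close>, all lying in \<open>[\<nu>, \<mu>]\<close>; hence \<open>\<nu> \<parallel>Z\<parallel>\<^sub>F\<^sup>2 \<le> \<parallel>Z\<parallel>\<^sub>W\<^sup>2 \<le> \<mu> \<parallel>Z\<parallel>\<^sub>F\<^sup>2\<close>,
  and RIP turns into \<open>(1-\<delta>)/\<mu> \<parallel>Z\<parallel>\<^sub>W\<^sup>2 \<le> \<parallel>\<A>Z\<parallel>\<^sup>2 \<le> (1+\<delta>)/\<nu> \<parallel>Z\<parallel>\<^sub>W\<^sup>2\<close> for every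
  combination of \<open>Z\<^sub>1, Z\<^sub>2\<close>, whose rank is at most \<open>r\<^sub>1 + r\<^sub>2\<close>.  With \<open>a = \<parallel>Z\<^sub>1\<parallel>\<^sub>W\<close>,
  \<open>b = \<parallel>Z\<^sub>2\<parallel>\<^sub>W\<close>, W-orthogonality gives \<open>\<parallel>bZ\<^sub>1 \<plusminus> aZ\<^sub>2\<parallel>\<^sub>W\<^sup>2 = 2a\<^sup>2b\<^sup>2\<close>, and polarization
  \<open>4ab\<langle>\<A>Z\<^sub>1, \<A>Z\<^sub>2\<rangle> = \<parallel>\<A>(bZ\<^sub>1 + aZ\<^sub>2)\<parallel>\<^sup>2 - \<parallel>\<A>(bZ\<^sub>1 - aZ\<^sub>2)\<parallel>\<^sup>2\<close> bounds the inner product by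
  the width of that two-sided estimate.\<close>

lemma rank_add_le:
  fixes A B :: "real^'n^'m"
  shows "rank (A + B) \<le> rank A + rank B"
proof -
  let ?S = "{x + y |x y. x \<in> span (rows A) \<and> y \<in> span (rows B)}"
  have "rows (A + B) \<subseteq> ?S"
  proof
    fix x assume "x \<in> rows (A + B)"
    then obtain i where "x = row i A + row i B"
      by (auto simp: rows_def row_def vec_eq_iff)
    moreover have "row i A \<in> span (rows A)" "row i B \<in> span (rows B)"
      by (auto simp: rows_def intro: span_base)
    ultimately show "x \<in> ?S" by blast
  qed
  then have "rank (A + B) \<le> dim ?S"
    unfolding row_rank_def by (rule dim_subset)
  also have "\<dots> \<le> dim (span (rows A)) + dim (span (rows B))"
    using dim_sums_Int[OF subspace_span subspace_span, of "rows A" "rows B"] by linarith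
  finally show ?thesis by (simp add: row_rank_def)
qed

lemma rank_scaleR_le:
  fixes A :: "real^'n^'m"
  shows "rank (c *\<^sub>R A) \<le> rank A"
  by (metis matrix_mul_lid scalar_matrix_assoc rank_mul_le_right)

lemma rank_lincomb_le:
  fixes A B :: "real^'n^'m"
  shows "rank (x *\<^sub>R A + y *\<^sub>R B) \<le> rank A + rank B"
  using rank_add_le[of "x *\<^sub>R A" "y *\<^sub>R B"] rank_scaleR_le[of x A] rank_scaleR_le[of y B]
  by linarith

lemma diag_mat_mult_nth: "(diag_mat d ** Z) $ i $ j = d i * Z $ i $ j"
  unfolding matrix_matrix_mult_def diag_mat_def
  by (auto simp: if_distrib if_distribR sum.delta'[OF finite] cong: if_cong)

lemma mult_diag_mat_nth: "(Z ** diag_mat d) $ i $ j = Z $ i $ j * d j"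
  by (simp add: diag_mat_def matrix_matrix_mult_def if_distrib cong: if_cong)

lemma frob_inner_eq_sum: "frob_inner X Y = (\<Sum>i\<in>UNIV. \<Sum>j\<in>UNIV. X$i$j * Y$i$j)"
proof -
  have "frob_inner X Y = (\<Sum>j\<in>UNIV. \<Sum>i\<in>UNIV. X$i$j * Y$i$j)"
    unfolding frob_inner_def trace_def matrix_matrix_mult_def transpose_def by simp
  also have "\<dots> = (\<Sum>i\<in>UNIV. \<Sum>j\<in>UNIV. X$i$j * Y$i$j)"
    by (rule sum.swap)
  finally show ?thesis .
qed

lemma frob_norm_power2: "(frob_norm Z)\<^sup>2 = (\<Sum>i\<in>UNIV. \<Sum>j\<in>UNIV. (Z$i$j)\<^sup>2)"
  by (simp add: frob_norm_def frob_inner_eq_sum sum_nonneg power2_eq_square)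

definition W_weight :: "real \<Rightarrow> real^'n2::finite^'n1::finite \<Rightarrow> 'n1 \<Rightarrow> 'n2 \<Rightarrow> real" where
  "W_weight eps G i j = (Lmat eps G $ i $ i) powr (1/4) * (Rmat eps G $ j $ j) powr (1/4)"

lemma W_inner_eq_sum:
  "W_inner eps G Z Y = (\<Sum>i\<in>UNIV. \<Sum>j\<in>UNIV. W_weight eps G i j * Z$i$j * Y$i$j)"
  unfolding W_inner_def frob_inner_eq_sum diag_powr_def W_weight_def
  by (simp add: diag_mat_mult_nth mult_diag_mat_nth mult_ac)

lemma Lmat_nth_diag: "Lmat eps G $ i $ i = eps + (norm (row i G))\<^sup>2"
  by (simp add: Lmat_def diag_part_def diag_mat_def mat_def matrix_matrix_mult_def transpose_def
      power2_norm_eq_inner inner_vec_def row_def)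

lemma Rmat_nth_diag: "Rmat eps G $ j $ j = eps + (norm (column j G))\<^sup>2"
  by (simp add: Rmat_def diag_part_def diag_mat_def mat_def matrix_matrix_mult_def transpose_def
      power2_norm_eq_inner inner_vec_def column_def)

lemma norm_row_le_vee_norm: "norm (row i G) \<le> vee_norm G"
  unfolding vee_norm_def by (rule max.coboundedI1) (rule Max_ge, auto)

lemma norm_column_le_vee_norm: "norm (column j G) \<le> vee_norm G"
  unfolding vee_norm_def by (rule max.coboundedI2) (rule Max_ge, auto)

lemma W_weight_bounds:
  assumes "eps > 0"
  shows "sqrt eps \<le> W_weight eps G i j" and "W_weight eps G i j \<le> sqrt (eps + (vee_norm G)\<^sup>2)"
proof -
  let ?l = "Lmat eps G $ i $ i" and ?r = "Rmat eps G $ j $ j" and ?M = "eps + (vee_norm G)\<^sup>2"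
  have l: "eps \<le> ?l" "?l \<le> ?M"
    using power_mono[OF norm_row_le_vee_norm[of i G] norm_ge_zero] by (simp_all add: Lmat_nth_diag)
  have r: "eps \<le> ?r" "?r \<le> ?M"
    using power_mono[OF norm_column_le_vee_norm[of j G] norm_ge_zero] by (simp_all add: Rmat_nth_diag)
  have sqrt_eq: "sqrt x = x powr (1/4) * x powr (1/4)" if "x > 0" for x :: real
    using that by (simp add: powr_add[symmetric] powr_half_sqrt)
  have "sqrt eps = eps powr (1/4) * eps powr (1/4)"
    using assms by (rule sqrt_eq)
  also have "\<dots> \<le> W_weight eps G i j"
    unfolding W_weight_def using assms l r by (intro mult_mono powr_mono2) auto
  finally show "sqrt eps \<le> W_weight eps G i j" .
  have "W_weight eps G i j \<le> ?M powr (1/4) * ?M powr (1/4)"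
    unfolding W_weight_def using assms l r by (intro mult_mono powr_mono2) auto
  also have "\<dots> = sqrt ?M"
    using assms by (simp add: sqrt_eq add_pos_nonneg)
  finally show "W_weight eps G i j \<le> sqrt ?M" .
qed

lemma weighted_sum_squares_bounds:
  fixes w Z :: "'a \<Rightarrow> 'b \<Rightarrow> real"
  assumes "\<And>i j. lo \<le> w i j" and "\<And>i j. w i j \<le> hi"
  shows "lo * (\<Sum>i\<in>I. \<Sum>j\<in>J. (Z i j)\<^sup>2) \<le> (\<Sum>i\<in>I. \<Sum>j\<in>J. w i j * Z i j * Z i j)"
    and "(\<Sum>i\<in>I. \<Sum>j\<in>J. w i j * Z i j * Z i j) \<le> hi * (\<Sum>i\<in>I. \<Sum>j\<in>J. (Z i j)\<^sup>2)"
  unfolding sum_distrib_left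
  by (intro sum_mono; simp add: power2_eq_square mult.assoc mult_right_mono assms)+

lemma W_inner_self_bounds:
  assumes "eps > 0"
  shows "sqrt eps * (frob_norm Z)\<^sup>2 \<le> W_inner eps G Z Z"
    and "W_inner eps G Z Z \<le> sqrt (eps + (vee_norm G)\<^sup>2) * (frob_norm Z)\<^sup>2"
  unfolding W_inner_eq_sum frob_norm_power2
  using weighted_sum_squares_bounds[of "sqrt eps" "W_weight eps G" "sqrt (eps + (vee_norm G)\<^sup>2)",
      OF W_weight_bounds[OF assms]]
  by auto

lemma W_inner_self_nonneg:
  assumes "eps > 0"
  shows "0 \<le> W_inner eps G Z Z"
  using W_inner_self_bounds(1)[OF assms, of Z] assms
  by (meson order_trans real_sqrt_ge_zero zero_le_power2 mult_nonneg_nonneg less_imp_le)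

lemma W_inner_lincomb_self:
  "W_inner eps G (x *\<^sub>R Z + y *\<^sub>R Y) (x *\<^sub>R Z + y *\<^sub>R Y) =
     x\<^sup>2 * W_inner eps G Z Z + y\<^sup>2 * W_inner eps G Y Y + 2 * x * y * W_inner eps G Z Y"
  unfolding W_inner_eq_sum sum_distrib_left sum.distrib[symmetric]
  by (intro sum.cong refl) (simp add: power2_eq_square algebra_simps)

lemma RIP_W_inner_bounds:
  assumes "RIP A s \<delta>" and "rank Z \<le> s" and "eps > 0"
  shows "(1 - \<delta>) / sqrt (eps + (vee_norm G)\<^sup>2) * W_inner eps G Z Z \<le> (norm (A Z))\<^sup>2"
    and "(norm (A Z))\<^sup>2 \<le> (1 + \<delta>) / sqrt eps * W_inner eps G Z Z"
proof -
  let ?\<nu> = "sqrt eps" and ?\<mu> = "sqrt (eps + (vee_norm G)\<^sup>2)" and ?F = "(frob_norm Z)\<^sup>2"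
  have pos: "?\<nu> > 0" "?\<mu> > 0"
    using assms(3) by (auto intro: add_pos_nonneg)
  have \<delta>: "0 < \<delta>" "\<delta> < 1"
    and rip: "(1 - \<delta>) * ?F \<le> (norm (A Z))\<^sup>2" "(norm (A Z))\<^sup>2 \<le> (1 + \<delta>) * ?F"
    using assms(1,2) unfolding RIP_def by auto
  have "(1 - \<delta>) / ?\<mu> * W_inner eps G Z Z \<le> (1 - \<delta>) / ?\<mu> * (?\<mu> * ?F)"
    using W_inner_self_bounds(2)[OF assms(3)] \<delta> pos by (intro mult_left_mono) auto
  also have "\<dots> = (1 - \<delta>) * ?F"
    using pos by simp
  finally show "(1 - \<delta>) / ?\<mu> * W_inner eps G Z Z \<le> (norm (A Z))\<^sup>2"
    using rip(1) by linarith
  have "(1 + \<delta>) * ?F = (1 + \<delta>) / ?\<nu> * (?\<nu> * ?F)"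
    using pos by simp
  also have "\<dots> \<le> (1 + \<delta>) / ?\<nu> * W_inner eps G Z Z"
    using W_inner_self_bounds(1)[OF assms(3)] \<delta> pos by (intro mult_left_mono) auto
  finally show "(norm (A Z))\<^sup>2 \<le> (1 + \<delta>) / ?\<nu> * W_inner eps G Z Z"
    using rip(2) by linarith
qed

lemma norm_lincomb_diff_power2:
  fixes X Y :: "'a::real_inner"
  shows "(norm (b *\<^sub>R X + a *\<^sub>R Y))\<^sup>2 - (norm (b *\<^sub>R X + (-a) *\<^sub>R Y))\<^sup>2 = 4 * a * b * inner X Y"
  unfolding power2_norm_eq_inner inner_add_left inner_add_right inner_scaleR_left inner_scaleR_right
    inner_commute[of Y X] by (simp add: algebra_simps)

lemma abs_inner_le_by_polarization:
  fixes A :: "'a::real_vector \<Rightarrow> 'b::real_inner" and Q :: "'a \<Rightarrow> real"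
  assumes "linear A"
    and Q_lincomb: "\<And>x y. Q (x *\<^sub>R Z1 + y *\<^sub>R Z2) = x\<^sup>2 * Q Z1 + y\<^sup>2 * Q Z2"
    and lower: "\<And>x y. lo * Q (x *\<^sub>R Z1 + y *\<^sub>R Z2) \<le> (norm (A (x *\<^sub>R Z1 + y *\<^sub>R Z2)))\<^sup>2"
    and upper: "\<And>x y. (norm (A (x *\<^sub>R Z1 + y *\<^sub>R Z2)))\<^sup>2 \<le> hi * Q (x *\<^sub>R Z1 + y *\<^sub>R Z2)"
    and "0 \<le> Q Z1" "0 \<le> Q Z2"
  shows "\<bar>inner (A Z1) (A Z2)\<bar> \<le> (hi - lo) / 2 * sqrt (Q Z1) * sqrt (Q Z2)"
proof (cases "Q Z1 = 0 \<or> Q Z2 = 0")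
  case True
  have "(norm (A Z1))\<^sup>2 \<le> hi * Q Z1" "(norm (A Z2))\<^sup>2 \<le> hi * Q Z2"
    using upper[of 1 0] upper[of 0 1] by simp_all
  with True have "A Z1 = 0 \<or> A Z2 = 0" by auto
  with True show ?thesis by auto
next
  case False
  define a where "a = sqrt (Q Z1)"
  define b where "b = sqrt (Q Z2)"
  have ab: "a * b > 0" "a \<ge> 0" "b \<ge> 0" and Q: "Q Z1 = a\<^sup>2" "Q Z2 = b\<^sup>2"
    using False assms(5,6) by (auto simp: a_def b_def)
  have A_lincomb: "A (x *\<^sub>R Z1 + y *\<^sub>R Z2) = x *\<^sub>R A Z1 + y *\<^sub>R A Z2" for x y
    using assms(1) by (simp add: linear_add linear_scale)
  have "4 * (a * b) * \<bar>inner (A Z1) (A Z2)\<bar> = \<bar>(norm (A (b *\<^sub>R Z1 + a *\<^sub>R Z2)))\<^sup>2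
          - (norm (A (b *\<^sub>R Z1 + (-a) *\<^sub>R Z2)))\<^sup>2\<bar>"
    unfolding A_lincomb norm_lincomb_diff_power2 using ab by (simp add: abs_mult)
  also have "\<dots> \<le> hi * (2 * (a * b)\<^sup>2) - lo * (2 * (a * b)\<^sup>2)"
    using lower[of b a] upper[of b a] lower[of b "-a"] upper[of b "-a"]
    unfolding Q_lincomb Q power_mult_distrib abs_le_iff by simp
  also have "\<dots> = 4 * (a * b) * ((hi - lo) / 2 * a * b)"
    by (simp add: power2_eq_square algebra_simps)
  finally show ?thesis
    unfolding a_def[symmetric] b_def[symmetric] using ab(1)
    by (simp only: mult_le_cancel_left_pos mult_pos_pos zero_less_numeral)
qed

theorem lemma3p8:
  fixes G Z1 Z2 :: "real^'n2::finite^'n1::finite"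
    and A :: "real^'n2^'n1 \<Rightarrow> real^'m::finite"
    and eps \<delta> :: real and r1 r2 :: nat
  assumes "eps > 0"
    and "rank Z1 = r1" and "rank Z2 = r2"
    and "r1 + r2 \<le> min CARD('n1) CARD('n2)"
    and "W_inner eps G Z1 Z2 = 0"
    and "linear A"
    and "RIP A (r1 + r2) \<delta>"
  shows "let \<nu> = sqrt eps; \<mu> = sqrt (eps + (vee_norm G)\<^sup>2) in
    \<bar>inner (A Z1) (A Z2)\<bar> \<le>
      1/2 * ((1/\<nu> - 1/\<mu>) + (1/\<nu> + 1/\<mu>) * \<delta>) * W_norm eps G Z1 * W_norm eps G Z2"
proof -
  define \<nu> where "\<nu> = sqrt eps"
  define \<mu> where "\<mu> = sqrt (eps + (vee_norm G)\<^sup>2)"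
  let ?Q = "\<lambda>Z. W_inner eps G Z Z"
  \<comment> \<open>The bound \<open>r\<^sub>1 + r\<^sub>2 \<le> min n\<^sub>1 n\<^sub>2\<close> only guarantees that such \<open>Z\<^sub>1, Z\<^sub>2\<close> exist.\<close>
  have rank: "rank (x *\<^sub>R Z1 + y *\<^sub>R Z2) \<le> r1 + r2" for x y
    using rank_lincomb_le assms(2,3) by blast
  have width: "((1 + \<delta>) / \<nu> - (1 - \<delta>) / \<mu>) / 2 = 1/2 * ((1/\<nu> - 1/\<mu>) + (1/\<nu> + 1/\<mu>) * \<delta>)"
    by (simp add: diff_divide_distrib add_divide_distrib algebra_simps)
  have "\<bar>inner (A Z1) (A Z2)\<bar> \<le> ((1 + \<delta>) / \<nu> - (1 - \<delta>) / \<mu>) / 2 * sqrt (?Q Z1) * sqrt (?Q Z2)"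
    unfolding \<nu>_def \<mu>_def
    by (rule abs_inner_le_by_polarization[OF assms(6) _
          RIP_W_inner_bounds[OF assms(7) rank assms(1)]
          W_inner_self_nonneg[OF assms(1)] W_inner_self_nonneg[OF assms(1)]])
      (simp add: W_inner_lincomb_self assms(5))
  then show ?thesis
    unfolding width by (simp add: Let_def W_norm_def \<nu>_def \<mu>_def)
qed

end
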